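(* Fix a scenario $s\in S$. Let $\Pi_s\subseteq\mathbb{R}^{n+1}$ be any neighborhood of the origin and let $\Pi_s^*=\Pi_s\cap(\mathbb{R}^n\times\mathbb{R}_+)$. Define $$\bar P_s:=\Big\{(x,\theta_s)\in\mathbb{R}^n\times\mathbb{R}:\ \lambda^Tx+\theta_s\ge \overline{Q}_s^*(\lambda,1)\ \text{ and }\ \lambda^Tx\ge \phi_s(\lambda)\ \text{ for all }\lambda\in\mathbb{R}^n\Big\}.$$ Then $P_s(\Pi_s^* )=\bar P_s$.
   Context: Two-stage stochastic integer program with finite scenario set $S$ and probabilities $p_s>0$, $\sum_{s\in S}p_s=1$. Data: $c\in\mathbb{R}^n$, matrix $A$ and vector $b$, and for each $s\in S$ matrices $T^s,W^s$ and vectors $h^s,q^s$ (all data rational). $X=\{x\in\mathbb{R}^n: x_j\in\mathbb{Z},\ j\in J_X\}$ and $Y=\{y\in\mathbb{R}^{n_y}: y_j\in\mathbb{Z},\ j\in J_Y\}$ for given index sets $J_X,J_Y$. For each $s$, $K^s:=\{(x,y)\in X\times Y: Ax\ge b,\ T^sx+W^sy\ge h^s\}$, assumed nonempty and bounded. Define $\overline{Q}_s^*:\mathbb{R}^n\times\mathbb{R}_+\to\mathbb{R}$ by $\overline{Q}_s^*(\pi,\pi_0)=\min\{\pi^Tx+\pi_0(q^s)^Ty:(x,y)\in K^s\}$. For $\Pi\subseteq\mathbb{R}^n\times\mathbb{R}_+$, $P_s(\Pi):=\{(x,\theta_s)\in\mathbb{R}^n\times\mathbb{R}:\ \pi^Tx+\pi_0\theta_s\ge\overline{Q}_s^*(\pi,\pi_0)\text{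 for all }(\pi,\pi_0)\in\Pi\}$. For $\lambda\in\mathbb{R}^n$, $\phi_s(\lambda):=\inf\{\mathbb{1}^Tv+\mathbb{1}^Tu+\lambda^Tx:\ Ax+u\ge b,\ T^sx+W^sy+v\ge h^s,\ x\in X,\ y\in Y,\ u\ge0,\ v\ge 0\}\in\mathbb{R}\cup\{-\infty\}$ (the inequality $\lambda^Tx\ge\phi_s(\lambda)$ is the Lagrangian feasibility cut; $\lambda^Tx+\theta_s\ge\overline{Q}_s^*(\lambda,1)$ is the Lagrangian optimality cut). *)

theory Defs
  imports "HOL-Analysis.Analysis"
begin

text \<open>Data of one fixed scenario s: first-stage x :: real^'n, second-stage y :: real^'ny,
  first-stage constraints A x \<ge> b (rows indexed by 'm1), scenario constraints
  T x + W y \<ge> h (rows indexed by 'm2), second-stage cost q.\<close>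

definition vge :: "real^'m \<Rightarrow> real^'m \<Rightarrow> bool" where
  "vge u w \<longleftrightarrow> (\<forall>i. u $ i \<ge> w $ i)"

definition mixed_int :: "'n set \<Rightarrow> (real^'n) set" where
  "mixed_int J = {x. \<forall>j\<in>J. x $ j \<in> \<int>}"

definition Kset :: "'nx set \<Rightarrow> 'ny set \<Rightarrow> real^'nx^'m1 \<Rightarrow> real^'m1
    \<Rightarrow> real^'nx^'m2 \<Rightarrow> real^'ny^'m2 \<Rightarrow> real^'m2 \<Rightarrow> ((real^'nx) \<times> (real^'ny)) set" where
  "Kset JX JY A b T W h =
     {(x, y). x \<in> mixed_int JX \<and> y \<in> mixed_int JY \<and> vge (A *v x) b
              \<and> vge (T *v x + W *v y) h}"

text \<open>\<open>Qbar\<close> = \<open>min{\<pi>\<^sup>T x + \<pi>\<^sub>0 q\<^sup>T y : (x,y) \<in> K}\<close> (the minimum is attained for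
  bounded nonempty mixed-integer sets with rational data; we write it as an infimum).\<close>
definition Qbar :: "'nx set \<Rightarrow> 'ny set \<Rightarrow> real^'nx^'m1 \<Rightarrow> real^'m1
    \<Rightarrow> real^'nx^'m2 \<Rightarrow> real^'ny^'m2 \<Rightarrow> real^'m2 \<Rightarrow> real^'ny
    \<Rightarrow> real^'nx \<Rightarrow> real \<Rightarrow> real" where
  "Qbar JX JY A b T W h q \<pi> \<pi>0 =
     Inf ((\<lambda>(x, y). \<pi> \<bullet> x + \<pi>0 * (q \<bullet> y)) ` Kset JX JY A b T W h)"

definition phi :: "'nx set \<Rightarrow> 'ny set \<Rightarrow> real^'nx^'m1 \<Rightarrow> real^'m1
    \<Rightarrow> real^'nx^'m2 \<Rightarrow> real^'ny^'m2 \<Rightarrow> real^'m2 \<Rightarrow> real^'nx \<Rightarrow> ereal" where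
  "phi JX JY A b T W h lam =
     Inf {ereal (sum (\<lambda>i. v $ i) UNIV + sum (\<lambda>i. u $ i) UNIV + lam \<bullet> x) | x y u v.
            x \<in> mixed_int JX \<and> y \<in> mixed_int JY \<and> vge u 0 \<and> vge v 0
            \<and> vge (A *v x + u) b \<and> vge (T *v x + W *v y + v) h}"

definition Pset :: "'nx set \<Rightarrow> 'ny set \<Rightarrow> real^'nx^'m1 \<Rightarrow> real^'m1
    \<Rightarrow> real^'nx^'m2 \<Rightarrow> real^'ny^'m2 \<Rightarrow> real^'m2 \<Rightarrow> real^'ny
    \<Rightarrow> ((real^'nx) \<times> real) set \<Rightarrow> ((real^'nx) \<times> real) set" where
  "Pset JX JY A b T W h q PP =
     {(x, \<theta>). \<forall>(\<pi>, \<pi>0)\<in>PP. \<pi> \<bullet> x + \<pi>0 * \<theta> \<ge> Qbar JX JY A b T W h q \<pi> \<pi>0}"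

definition Pbar :: "'nx set \<Rightarrow> 'ny set \<Rightarrow> real^'nx^'m1 \<Rightarrow> real^'m1
    \<Rightarrow> real^'nx^'m2 \<Rightarrow> real^'ny^'m2 \<Rightarrow> real^'m2 \<Rightarrow> real^'ny
    \<Rightarrow> ((real^'nx) \<times> real) set" where
  "Pbar JX JY A b T W h q =
     {(x, \<theta>). \<forall>lam. lam \<bullet> x + \<theta> \<ge> Qbar JX JY A b T W h q lam 1
                 \<and> ereal (lam \<bullet> x) \<ge> phi JX JY A b T W h lam}"

end

theory Submission
  imports Defs
begin

text \<open>For nonempty bounded \<open>K\<close>, \<open>Qbar\<close> is finite, positively homogeneous and superadditive
  in \<open>(\<pi>, \<pi>\<^sub>0)\<close>. Homogeneity makes the family of cuts invariant under positive scaling, so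
  the cuts from a neighbourhood of the origin inside the half-space \<open>\<pi>\<^sub>0 \<ge> 0\<close> are those of
  the whole half-space. Its rays with \<open>\<pi>\<^sub>0 > 0\<close> scale to the Lagrangian optimality cuts. The
  rays with \<open>\<pi>\<^sub>0 = 0\<close> give \<open>\<lambda>\<^sup>T x \<ge> Qbar(\<lambda>, 0)\<close>: these imply the feasibility cuts because
  \<open>\<phi>(\<lambda>) \<le> Qbar(\<lambda>, 0)\<close>, and conversely follow from the optimality cuts, since by superadditivity
  \<open>t Qbar(\<lambda>, 0) + Qbar(0, 1) \<le> Qbar(t\<lambda>, 1) \<le> t \<lambda>\<^sup>T x + \<theta>\<close> for all \<open>t > 0\<close>.\<close>

lemma cInf_image_scale:
  fixes f :: "'a \<Rightarrow> real"
  assumes "K \<noteq> {}" "bdd_below (f ` K)" "0 < c"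
  shows "Inf ((\<lambda>k. c * f k) ` K) = c * Inf (f ` K)"
proof -
  have "c * Inf (f ` K) = Inf ((*) c ` f ` K)"
    by (rule continuous_at_Inf_mono)
       (use assms in \<open>auto simp: mono_def intro!: continuous_intros\<close>)
  then show ?thesis
    by (simp add: image_image)
qed

lemma cInf_image_add_le:
  fixes f g :: "'a \<Rightarrow> real"
  assumes "K \<noteq> {}" "bdd_below (f ` K)" "bdd_below (g ` K)"
  shows "Inf (f ` K) + Inf (g ` K) \<le> Inf ((\<lambda>k. f k + g k) ` K)"
proof (rule cInf_greatest)
  show "(\<lambda>k. f k + g k) ` K \<noteq> {}"
    using assms by simp
next
  fix z assume "z \<in> (\<lambda>k. f k + g k) ` K"
  then obtain k where k: "k \<in> K" "z = f k + g k"
    by auto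
  have "Inf (f ` K) \<le> f k" "Inf (g ` K) \<le> g k"
    using assms k by (auto intro: cInf_lower)
  then show "Inf (f ` K) + Inf (g ` K) \<le> z"
    using k by simp
qed

lemma bdd_below_objective_image:
  fixes K :: "((real^'a) \<times> (real^'b)) set"
  assumes "bounded K"
  shows "bdd_below ((\<lambda>(x, y). \<pi> \<bullet> x + \<pi>0 * (q \<bullet> y)) ` K)"
proof -
  have "bounded_linear (\<lambda>(x::real^'a, y::real^'b). \<pi> \<bullet> x + \<pi>0 * (q \<bullet> y))"
    unfolding case_prod_unfold
    by (intro bounded_linear_add bounded_linear_const_mult
        bounded_linear_compose[OF bounded_linear_inner_right] bounded_linear_fst bounded_linear_snd)
  then show ?thesis
    using assms by (intro bounded_imp_bdd_below bounded_linear_image)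
qed

lemma Qbar_scale:
  assumes "Kset JX JY A b T W h \<noteq> {}" "bounded (Kset JX JY A b T W h)" "0 < c"
  shows "Qbar JX JY A b T W h q (c *\<^sub>R \<pi>) (c * \<pi>0) = c * Qbar JX JY A b T W h q \<pi> \<pi>0"
proof -
  have "(\<lambda>(x, y). (c *\<^sub>R \<pi>) \<bullet> x + (c * \<pi>0) * (q \<bullet> y))
      = (\<lambda>z. c * (\<lambda>(x, y). \<pi> \<bullet> x + \<pi>0 * (q \<bullet> y)) z)"
    by (auto simp: algebra_simps)
  then show ?thesis
    unfolding Qbar_def
    using cInf_image_scale[OF assms(1) bdd_below_objective_image[OF assms(2)] assms(3)]
    by simp
qed

lemma Qbar_superadditive:
  assumes "Kset JX JY A b T W h \<noteq> {}" "bounded (Kset JX JY A b T W h)"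
  shows "Qbar JX JY A b T W h q \<pi> a + Qbar JX JY A b T W h q \<pi>' a'
      \<le> Qbar JX JY A b T W h q (\<pi> + \<pi>') (a + a')"
proof -
  have "(\<lambda>(x, y). (\<pi> + \<pi>') \<bullet> x + (a + a') * (q \<bullet> y))
      = (\<lambda>z. (\<lambda>(x, y). \<pi> \<bullet> x + a * (q \<bullet> y)) z + (\<lambda>(x, y). \<pi>' \<bullet> x + a' * (q \<bullet> y)) z)"
    by (auto simp: algebra_simps)
  then show ?thesis
    unfolding Qbar_def
    using cInf_image_add_le[OF assms(1)
        bdd_below_objective_image[OF assms(2)] bdd_below_objective_image[OF assms(2)]]
    by simp
qed

text \<open>Every \<open>(x, y) \<in> K\<close> is feasible for the relaxation defining \<open>\<phi>\<close> with slacks \<open>u = v = 0\<close>.\<close>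

lemma phi_le_Kset:
  fixes A :: "real^'nx^('m1::finite)" and T :: "real^'nx^('m2::finite)"
  assumes "(x, y) \<in> Kset JX JY A b T W h"
  shows "phi JX JY A b T W h lam \<le> ereal (lam \<bullet> x)"
  unfolding phi_def
proof (rule Inf_lower, intro CollectI exI conjI)
  show "ereal (lam \<bullet> x)
      = ereal (sum (\<lambda>i. (0::real^'m2) $ i) UNIV + sum (\<lambda>i. (0::real^'m1) $ i) UNIV + lam \<bullet> x)"
    by simp
qed (use assms in \<open>auto simp: Kset_def vge_def\<close>)

lemma phi_le_Qbar_zero:
  assumes "Kset JX JY A b T W h \<noteq> {}" "bounded (Kset JX JY A b T W h)"
  shows "phi JX JY A b T W h lam \<le> ereal (Qbar JX JY A b T W h q lam 0)"
proof -
  define S where "S = (\<lambda>(x, y). lam \<bullet> x + 0 * (q \<bullet> y)) ` Kset JX JY A b T W h"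
  have "ereal (Inf S) = (INF a\<in>S. ereal a)"
    using assms bdd_below_objective_image[OF assms(2), of lam 0 q]
    by (intro ereal_Inf') (auto simp: S_def)
  moreover have "phi JX JY A b T W h lam \<le> (INF a\<in>S. ereal a)"
    by (rule INF_greatest) (auto simp: S_def intro: phi_le_Kset)
  ultimately show ?thesis
    by (simp add: Qbar_def S_def)
qed

text \<open>Scaling a point of the cone into the ball around the origin transfers the inequality.\<close>

lemma homogeneous_le_on_cone_from_nbhd:
  fixes Q L :: "'a::real_normed_vector \<Rightarrow> real"
  assumes hom: "\<And>c v. 0 < c \<Longrightarrow> Q (c *\<^sub>R v) = c * Q v \<and> L (c *\<^sub>R v) = c * L v"
    and "cone C" and "0 \<in> interior U"
    and le: "\<And>v. v \<in> U \<inter> C \<Longrightarrow> Q v \<le> L v"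
    and v: "v \<in> C"
  shows "Q v \<le> L v"
proof -
  obtain e where e: "0 < e" "ball 0 e \<subseteq> U"
    using \<open>0 \<in> interior U\<close> by (auto simp: mem_interior)
  define c where "c = e / (2 * (norm v + 1))"
  have c: "0 < c"
    using e by (simp add: c_def add_nonneg_pos)
  have "norm (c *\<^sub>R v) < e"
  proof -
    have "norm (c *\<^sub>R v) \<le> c * (norm v + 1)"
      using c by (simp add: algebra_simps)
    also have "\<dots> = e / 2"
      using add_nonneg_pos[OF norm_ge_zero[of v] zero_less_one] by (simp add: c_def field_simps)
    finally show ?thesis
      using e by simp
  qed
  then have "c *\<^sub>R v \<in> U \<inter> C"
    using e \<open>cone C\<close> v c by (auto simp: cone_def)
  then have "Q (c *\<^sub>R v) \<le> L (c *\<^sub>R v)"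
    by (rule le)
  then have "c * Q v \<le> c * L v"
    using hom[OF c] by simp
  then show ?thesis
    using c by simp
qed

lemma homogeneous_superadditive_le_from_level_one:
  fixes Q :: "'a::real_inner \<Rightarrow> real \<Rightarrow> real"
  assumes hom: "\<And>c p p0. 0 < c \<Longrightarrow> Q (c *\<^sub>R p) (c * p0) = c * Q p p0"
    and sup: "\<And>p a p' a'. Q p a + Q p' a' \<le> Q (p + p') (a + a')"
    and level_one: "\<And>lam. Q lam 1 \<le> lam \<bullet> x + \<theta>"
    and "0 \<le> p0"
  shows "Q p p0 \<le> p \<bullet> x + p0 * \<theta>"
proof (cases "p0 = 0")
  case False
  then have "0 < p0"
    using \<open>0 \<le> p0\<close> by simp
  have "Q p p0 = p0 * Q ((1 / p0) *\<^sub>R p) 1"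
    using hom[OF \<open>0 < p0\<close>, of "(1 / p0) *\<^sub>R p" 1] \<open>0 < p0\<close> by simp
  also have "\<dots> \<le> p0 * ((1 / p0) *\<^sub>R p \<bullet> x + \<theta>)"
    by (rule mult_left_mono[OF level_one]) (use \<open>0 < p0\<close> in simp)
  also have "\<dots> = p \<bullet> x + p0 * \<theta>"
    using \<open>0 < p0\<close> by (simp add: algebra_simps)
  finally show ?thesis .
next
  case True
  have ray: "t * Q p 0 + Q 0 1 \<le> t * (p \<bullet> x) + \<theta>" if "0 < t" for t
  proof -
    have "t * Q p 0 + Q 0 1 = Q (t *\<^sub>R p) 0 + Q 0 1"
      using hom[OF that, of p 0] by simp
    also have "\<dots> \<le> Q (t *\<^sub>R p) 1"
      using sup[of "t *\<^sub>R p" 0 0 1] by simp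
    also have "\<dots> \<le> t * (p \<bullet> x) + \<theta>"
      using level_one[of "t *\<^sub>R p"] by simp
    finally show ?thesis .
  qed
  have "Q p 0 \<le> p \<bullet> x"
  proof (rule ccontr)
    assume "\<not> Q p 0 \<le> p \<bullet> x"
    define d where "d = Q p 0 - p \<bullet> x"
    define t where "t = max 1 ((\<theta> - Q 0 1) / d + 1)"
    have "0 < d"
      using \<open>\<not> Q p 0 \<le> p \<bullet> x\<close> by (simp add: d_def)
    moreover have "(\<theta> - Q 0 1) / d < t"
      by (simp add: t_def)
    ultimately have "\<theta> - Q 0 1 < t * d"
      by (simp add: divide_less_eq)
    moreover have "t * Q p 0 + Q 0 1 \<le> t * (p \<bullet> x) + \<theta>"
      by (rule ray) (simp add: t_def)
    ultimately show False
      by (simp add: d_def algebra_simps)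
  qed
  then show ?thesis
    using True by simp
qed

lemma Pset_inter_nbhd_halfspace:
  assumes K_ne: "Kset JX JY A b T W h \<noteq> {}" and K_bdd: "bounded (Kset JX JY A b T W h)"
    and nbhd: "0 \<in> interior PP"
  shows "Pset JX JY A b T W h q (PP \<inter> {(\<pi>, \<pi>0). \<pi>0 \<ge> 0})
       = Pset JX JY A b T W h q {(\<pi>, \<pi>0). \<pi>0 \<ge> 0}"
proof (intro set_eqI iffI)
  fix z assume z: "z \<in> Pset JX JY A b T W h q (PP \<inter> {(\<pi>, \<pi>0). \<pi>0 \<ge> 0})"
  obtain x \<theta> where z_eq: "z = (x, \<theta>)"
    by (cases z)
  define Q where "Q = (\<lambda>(\<pi>, \<pi>0). Qbar JX JY A b T W h q \<pi> \<pi>0)"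
  define L where "L = (\<lambda>(\<pi>, \<pi>0). \<pi> \<bullet> x + \<pi>0 * \<theta>)"
  have hom: "Q (c *\<^sub>R v) = c * Q v \<and> L (c *\<^sub>R v) = c * L v" if "0 < c" for c v
    using Qbar_scale[OF K_ne K_bdd that]
    by (cases v) (simp add: Q_def L_def algebra_simps)
  have cone: "cone {(\<pi> :: real^'a, \<pi>0 :: real). \<pi>0 \<ge> 0}"
    by (auto simp: cone_def)
  have "Q v \<le> L v" if "v \<in> {(\<pi>, \<pi>0). \<pi>0 \<ge> 0}" for v
    by (rule homogeneous_le_on_cone_from_nbhd[OF hom cone nbhd _ that])
       (use z in \<open>auto simp: Pset_def z_eq Q_def L_def\<close>)
  then show "z \<in> Pset JX JY A b T W h q {(\<pi>, \<pi>0). \<pi>0 \<ge> 0}"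
    by (auto simp: Pset_def z_eq Q_def L_def)
qed (auto simp: Pset_def)

lemma Pset_halfspace_eq_Pbar:
  assumes K_ne: "Kset JX JY A b T W h \<noteq> {}" and K_bdd: "bounded (Kset JX JY A b T W h)"
  shows "Pset JX JY A b T W h q {(\<pi>, \<pi>0). \<pi>0 \<ge> 0} = Pbar JX JY A b T W h q"
proof -
  let ?Q = "Qbar JX JY A b T W h q"
  have "(\<forall>(\<pi>, \<pi>0) \<in> {(\<pi>, \<pi>0). \<pi>0 \<ge> 0}. ?Q \<pi> \<pi>0 \<le> \<pi> \<bullet> x + \<pi>0 * \<theta>)
      \<longleftrightarrow> (\<forall>lam. ?Q lam 1 \<le> lam \<bullet> x + \<theta> \<and> phi JX JY A b T W h lam \<le> ereal (lam \<bullet> x))"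
    for x \<theta>
  proof
    assume cuts: "\<forall>(\<pi>, \<pi>0) \<in> {(\<pi>, \<pi>0). \<pi>0 \<ge> 0}. ?Q \<pi> \<pi>0 \<le> \<pi> \<bullet> x + \<pi>0 * \<theta>"
    show "\<forall>lam. ?Q lam 1 \<le> lam \<bullet> x + \<theta> \<and> phi JX JY A b T W h lam \<le> ereal (lam \<bullet> x)"
    proof
      fix lam
      have "phi JX JY A b T W h lam \<le> ereal (?Q lam 0)"
        by (rule phi_le_Qbar_zero[OF K_ne K_bdd])
      also have "\<dots> \<le> ereal (lam \<bullet> x)"
        using cuts by fastforce
      finally have "phi JX JY A b T W h lam \<le> ereal (lam \<bullet> x)" .
      moreover have "?Q lam 1 \<le> lam \<bullet> x + \<theta>"
        using bspec[OF cuts, of "(lam, 1)"] by simp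
      ultimately show "?Q lam 1 \<le> lam \<bullet> x + \<theta> \<and> phi JX JY A b T W h lam \<le> ereal (lam \<bullet> x)"
        by simp
    qed
  next
    assume "\<forall>lam. ?Q lam 1 \<le> lam \<bullet> x + \<theta> \<and> phi JX JY A b T W h lam \<le> ereal (lam \<bullet> x)"
    then show "\<forall>(\<pi>, \<pi>0) \<in> {(\<pi>, \<pi>0). \<pi>0 \<ge> 0}. ?Q \<pi> \<pi>0 \<le> \<pi> \<bullet> x + \<pi>0 * \<theta>"
      using homogeneous_superadditive_le_from_level_one[of ?Q]
        Qbar_scale[OF K_ne K_bdd] Qbar_superadditive[OF K_ne K_bdd]
      by blast
  qed
  then show ?thesis
    unfolding Pset_def Pbar_def by auto
qed

theorem proposition1:
  fixes JX :: "('nx::finite) set" and JY :: "('ny::finite) set"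
    and A :: "real^'nx^('m1::finite)" and b :: "real^'m1"
    and T :: "real^'nx^('m2::finite)" and W :: "real^'ny^'m2" and h :: "real^'m2" and q :: "real^'ny"
    and PP :: "((real^'nx) \<times> real) set"
  assumes rat: "\<forall>i j. A $ i $ j \<in> \<rat>" "\<forall>i. b $ i \<in> \<rat>"
      "\<forall>i j. T $ i $ j \<in> \<rat>" "\<forall>i j. W $ i $ j \<in> \<rat>"
      "\<forall>i. h $ i \<in> \<rat>" "\<forall>i. q $ i \<in> \<rat>"
    and K_ne: "Kset JX JY A b T W h \<noteq> {}"
    and K_bdd: "bounded (Kset JX JY A b T W h)"
    and nbhd: "0 \<in> interior PP"
  shows "Pset JX JY A b T W h q (PP \<inter> {(\<pi>, \<pi>0). \<pi>0 \<ge> 0}) = Pbar JX JY A b T W h q"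
  using Pset_inter_nbhd_halfspace[OF K_ne K_bdd nbhd] Pset_halfspace_eq_Pbar[OF K_ne K_bdd]
  by simp

end
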